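(* Fix $a\in[1/2,1)$. For every $x\in\mathbb{R}$, the function $\theta\mapsto p_\theta^a(x)$ is continuously differentiable on $(-a/(1+a),\infty)\times\mathbb{R}\times(0,\infty)$, and its partial derivatives are continuous as functions of $(x,\theta)\in\mathbb{R}\times(-a/(1+a),\infty)\times\mathbb{R}\times(0,\infty)$.
   Context: $p_\theta$ is the GEV density: for $\theta=(\gamma,\mu,\sigma)\in\mathbb{R}\times\mathbb{R}\times(0,\infty)$, $p_\theta(x)=\sigma^{-1}e^{-u}u^{\gamma+1}\mathbf 1(1+\gamma z>0)$ with $z=(x-\mu)/\sigma$, $u=(1+\gamma z)^{-1/\gamma}$ for $\gamma\ne0$ and $u=e^{-z}$ for $\gamma=0$. *)

theory Defs
  imports "HOL-Analysis.Analysis"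
begin

definition gev_u :: "real \<Rightarrow> real \<Rightarrow> real \<Rightarrow> real \<Rightarrow> real" where
  "gev_u \<gamma> \<mu> \<sigma> x =
     (let z = (x - \<mu>) / \<sigma> in
      if \<gamma> = 0 then exp (- z) else (1 + \<gamma> * z) powr (- 1 / \<gamma>))"

definition gev_density :: "real \<times> real \<times> real \<Rightarrow> real \<Rightarrow> real" where
  "gev_density \<theta> x =
     (case \<theta> of (\<gamma>, \<mu>, \<sigma>) \<Rightarrow>
        (let z = (x - \<mu>) / \<sigma>; u = gev_u \<gamma> \<mu> \<sigma> x in
         if 1 + \<gamma> * z > 0 then (1 / \<sigma>) * exp (- u) * u powr (\<gamma> + 1) else 0))"

definition Theta_a :: "real \<Rightarrow> (real \<times> real \<times> real) set" where
  "Theta_a a = {- a / (1 + a)<..} \<times> UNIV \<times> {0<..}"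

end

theory Submission
  imports Defs
begin

text \<open>
  On the support \<open>w = 1 + \<gamma> z > 0\<close> the density power is \<open>exp (a * l)\<close> with log-density
  \<open>l = - ln \<sigma> - exp (- \<psi>) - (\<gamma> + 1) * \<psi>\<close>, where \<open>\<psi> = - ln u = z * \<phi> (\<gamma> z)\<close> and the
  function \<open>\<phi> y = ln (1 + y) / y\<close> is analytic at \<open>y = 0\<close>; so it is smooth in \<open>\<theta>\<close> there, also
  across \<open>\<gamma> = 0\<close>, and it vanishes where \<open>w < 0\<close>. Near a boundary point \<open>w = 0\<close> every partial
  derivative of \<open>l\<close> is \<open>O ((1 + exp (- \<psi>)) / w)\<close>, while \<open>exp (a * l) * (1 + exp (- \<psi>)) / w\<close>
  is \<open>O (w powr \<delta>)\<close> for some \<open>\<delta> > 0\<close>: for \<open>\<gamma> > 0\<close> because \<open>exp (- \<psi>) = w powr (- 1 / \<gamma>)\<close>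
  enters through \<open>exp (- a * exp (- \<psi>))\<close>, for \<open>\<gamma> < 0\<close> because the density power behaves like
  \<open>w powr c\<close> with \<open>c = - a * (\<gamma> + 1) / \<gamma>\<close>, and \<open>c > 1\<close> is exactly \<open>\<gamma> > - a / (1 + a)\<close>.
  Hence the gradient, extended by \<open>0\<close> off the support, is continuous, and the bound
  \<open>O (w powr (1 + \<delta>)) = O (norm (\<theta> - \<theta>\<^sub>0) powr (1 + \<delta>))\<close> gives derivative \<open>0\<close> at boundary points.
\<close>

section \<open>The function \<open>ln (1 + y) / y\<close>\<close>

definition ln1p_ratio :: "real \<Rightarrow> real" where
  "ln1p_ratio y = (if y = 0 then 1 else ln (1 + y) / y)"

definition ln1p_ratio' :: "real \<Rightarrow> real" where
  "ln1p_ratio' y = (if y = 0 then - 1/2 else (y / (1 + y) - ln (1 + y)) / y^2)"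

definition ln1p_ratio_coeff :: "nat \<Rightarrow> real" where
  "ln1p_ratio_coeff n = (-1)^n / real (n + 1)"

lemma summable_ln1p_ratio_coeff:
  assumes "\<bar>y\<bar> < 1" shows "summable (\<lambda>n. ln1p_ratio_coeff n * y^n)"
proof (rule summable_comparison_test'[where N = 0])
  show "summable (\<lambda>n. \<bar>y\<bar>^n)" using assms by (simp add: summable_geometric)
  show "norm (ln1p_ratio_coeff n * y^n) \<le> \<bar>y\<bar>^n" for n
    by (simp add: ln1p_ratio_coeff_def abs_mult power_abs divide_le_eq_1 mult_le_cancel_right1 field_simps)
qed

lemma ln1p_ratio_powser:
  assumes "\<bar>y\<bar> < 1" shows "ln1p_ratio y = (\<Sum>n. ln1p_ratio_coeff n * y^n)"
proof (cases "y = 0")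
  case True
  have "(\<Sum>n. ln1p_ratio_coeff n * 0^n) = ln1p_ratio_coeff 0" by (rule powser_zero)
  with True show ?thesis by (simp add: ln1p_ratio_def ln1p_ratio_coeff_def)
next
  case False
  have "ln (1 + y) = (\<Sum>n. (-1)^n * (1 / real (n + 1)) * ((1 + y) - 1)^(Suc n))"
    using assms by (intro ln_series) auto
  also have "\<dots> = (\<Sum>n. y * (ln1p_ratio_coeff n * y^n))"
    by (simp add: ln1p_ratio_coeff_def field_simps)
  also have "\<dots> = y * (\<Sum>n. ln1p_ratio_coeff n * y^n)"
    using summable_ln1p_ratio_coeff[OF assms] by (rule suminf_mult)
  finally show ?thesis using False by (simp add: ln1p_ratio_def)
qed

lemma ln1p_ratio_powser_deriv:
  assumes "\<bar>y\<bar> < 1"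
  shows "((\<lambda>t. \<Sum>n. ln1p_ratio_coeff n * t^n) has_real_derivative
           (\<Sum>n. diffs ln1p_ratio_coeff n * y^n)) (at y)"
  by (rule termdiffs_strong'[where K = 1]) (use assms summable_ln1p_ratio_coeff in auto)

lemma DERIV_ln1p_ratio_nonzero:
  assumes "y \<noteq> 0" "-1 < y" shows "(ln1p_ratio has_real_derivative ln1p_ratio' y) (at y)"
proof -
  have "\<forall>\<^sub>F t in nhds y. t \<noteq> 0" using assms(1) by (rule t1_space_nhds)
  moreover have "((\<lambda>t. ln (1 + t) / t) has_real_derivative ln1p_ratio' y) (at y)"
    using assms by (auto intro!: derivative_eq_intros simp: ln1p_ratio'_def field_simps power2_eq_square)
  ultimately show ?thesis
    by (subst DERIV_cong_ev[OF refl _ refl, where g = "\<lambda>t. ln (1 + t) / t"])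
       (auto elim!: eventually_mono simp: ln1p_ratio_def)
qed

lemma ln1p_ratio'_powser:
  assumes "\<bar>y\<bar> < 1" shows "ln1p_ratio' y = (\<Sum>n. diffs ln1p_ratio_coeff n * y^n)"
proof (cases "y = 0")
  case True
  have "(\<Sum>n. diffs ln1p_ratio_coeff n * 0^n) = diffs ln1p_ratio_coeff 0" by (rule powser_zero)
  with True show ?thesis by (simp add: diffs_def ln1p_ratio_coeff_def ln1p_ratio'_def)
next
  case False
  have "\<forall>\<^sub>F t in nhds y. t \<in> {-1<..<1}" using assms by (intro eventually_nhds_in_open) auto
  then have "(ln1p_ratio has_real_derivative (\<Sum>n. diffs ln1p_ratio_coeff n * y^n)) (at y)"
    by (subst DERIV_cong_ev[OF refl _ refl, where g = "\<lambda>t. \<Sum>n. ln1p_ratio_coeff n * t^n"])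
       (use ln1p_ratio_powser_deriv[OF assms] in \<open>auto elim!: eventually_mono simp: ln1p_ratio_powser\<close>)
  moreover have "(ln1p_ratio has_real_derivative ln1p_ratio' y) (at y)"
    using False assms by (intro DERIV_ln1p_ratio_nonzero) auto
  ultimately show ?thesis by (metis DERIV_unique)
qed

lemma DERIV_ln1p_ratio:
  assumes "-1 < y" shows "(ln1p_ratio has_real_derivative ln1p_ratio' y) (at y)"
proof (cases "y = 0")
  case True
  have "\<forall>\<^sub>F t in nhds (0::real). t \<in> {-1<..<1}" by (intro eventually_nhds_in_open) auto
  then show ?thesis
    using True ln1p_ratio_powser_deriv[of 0] ln1p_ratio'_powser[of 0]
    by (subst DERIV_cong_ev[OF refl _ refl, where g = "\<lambda>t. \<Sum>n. ln1p_ratio_coeff n * t^n"])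
       (auto elim!: eventually_mono simp: ln1p_ratio_powser)
next
  case False
  then show ?thesis using assms by (rule DERIV_ln1p_ratio_nonzero)
qed

lemma isCont_ln1p_ratio':
  assumes "-1 < y" shows "isCont ln1p_ratio' y"
proof (cases "\<bar>y\<bar> < 1")
  case True
  have "summable (\<lambda>n. diffs ln1p_ratio_coeff n * ((1 + \<bar>y\<bar>) / 2)^n)"
    by (rule termdiff_converges[where K = 1]) (use True summable_ln1p_ratio_coeff in auto)
  then have cont: "isCont (\<lambda>t. \<Sum>n. diffs ln1p_ratio_coeff n * t^n) y"
    by (rule isCont_powser) (use True in auto)
  have "\<forall>\<^sub>F t in nhds y. t \<in> {-1<..<1}" using True by (intro eventually_nhds_in_open) auto
  then have "\<forall>\<^sub>F t in nhds y. ln1p_ratio' t = (\<Sum>n. diffs ln1p_ratio_coeff n * t^n)"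
    by eventually_elim (simp add: ln1p_ratio'_powser abs_less_iff)
  from isCont_cong[OF this] cont show ?thesis by (rule iffD2)
next
  case False
  with assms have "0 < y" by auto
  then have cont: "isCont (\<lambda>t. (t / (1 + t) - ln (1 + t)) / t^2) y"
    by (intro continuous_intros) auto
  have "\<forall>\<^sub>F t in nhds y. t \<in> {0<..}" using \<open>0 < y\<close> by (intro eventually_nhds_in_open) auto
  then have "\<forall>\<^sub>F t in nhds y. ln1p_ratio' t = (t / (1 + t) - ln (1 + t)) / t^2"
    by eventually_elim (simp add: ln1p_ratio'_def)
  from isCont_cong[OF this] cont show ?thesis by (rule iffD2)
qed

lemma has_derivative_ln1p_ratio [derivative_intros]:
  "(f has_derivative f') (at x within S) \<Longrightarrow> -1 < f x \<Longrightarrow>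
   ((\<lambda>x. ln1p_ratio (f x)) has_derivative (\<lambda>h. f' h * ln1p_ratio' (f x))) (at x within S)"
  by (rule DERIV_compose_FDERIV[OF DERIV_ln1p_ratio])

lemma continuous_ln1p_ratio [continuous_intros]:
  "continuous (at p within S) f \<Longrightarrow> -1 < f p \<Longrightarrow> continuous (at p within S) (\<lambda>q. ln1p_ratio (f q))"
  by (rule continuous_within_compose3[OF DERIV_isCont[OF DERIV_ln1p_ratio]])

lemma continuous_ln1p_ratio' [continuous_intros]:
  "continuous (at p within S) f \<Longrightarrow> -1 < f p \<Longrightarrow> continuous (at p within S) (\<lambda>q. ln1p_ratio' (f q))"
  by (rule continuous_within_compose3[OF isCont_ln1p_ratio'])

lemma ln1p_ratio_mult: "y * ln1p_ratio y = ln (1 + y)"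
  by (simp add: ln1p_ratio_def)

lemma ln1p_ratio'_mult:
  assumes "-1 < y" shows "y^2 * ln1p_ratio' y = 1 - 1 / (1 + y) - ln (1 + y)"
proof (cases "y = 0")
  case False
  then have "y^2 * ln1p_ratio' y = y / (1 + y) - ln (1 + y)" by (simp add: ln1p_ratio'_def)
  also have "y / (1 + y) = 1 - 1 / (1 + y)" using assms by (simp add: field_simps)
  finally show ?thesis .
qed simp

lemma ln1p_ratio_add_ln1p_ratio':
  assumes "-1 < y" shows "ln1p_ratio y + y * ln1p_ratio' y = 1 / (1 + y)"
proof (cases "y = 0")
  case False
  then have "ln1p_ratio y + y * ln1p_ratio' y = ln (1 + y) / y + (y / (1 + y) - ln (1 + y)) / y"
    by (simp add: ln1p_ratio_def ln1p_ratio'_def power2_eq_square)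
  also have "\<dots> = (y / (1 + y)) / y" by (simp add: diff_divide_distrib)
  also have "\<dots> = 1 / (1 + y)" using False by simp
  finally show ?thesis .
qed (simp add: ln1p_ratio_def)

lemma linear_minus_exp_le:
  fixes a N v :: real
  assumes a: "0 < a" and N: "0 < N"
  shows "N * v - a * exp v \<le> N * ln (N / a)"
proof -
  \<comment> \<open>the maximum over \<open>v\<close> is attained where \<open>exp v = N / a\<close>\<close>
  have "ln (a * exp v / N) \<le> a * exp v / N - 1" using a N by (intro ln_le_minus_one) auto
  then have "N * (ln a + v - ln N) \<le> N * (a * exp v / N - 1)"
    using a N by (intro mult_left_mono) (auto simp: ln_mult ln_div)
  moreover have "N * (a * exp v / N - 1) = a * exp v - N" using N by (simp add: field_simps)
  moreover have "N * (ln a + v - ln N) = N * ln a + N * v - N * ln N" by (simp add: algebra_simps)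
  moreover have "N * ln (N / a) = N * ln N - N * ln a" using a N by (simp add: ln_div right_diff_distrib)
  ultimately show ?thesis using N by linarith
qed

lemma abs_ln_le_inverse:
  fixes w :: real
  assumes "0 < w" "w < 1" shows "\<bar>ln w\<bar> \<le> 1 / w"
proof -
  have "ln (1 / w) \<le> 1 / w - 1" using assms ln_le_minus_one[of "1 / w"] by simp
  with assms show ?thesis by (simp add: ln_div)
qed

lemma norm_triple_le: "norm ((a, b, c) :: real \<times> real \<times> real) \<le> \<bar>a\<bar> + \<bar>b\<bar> + \<bar>c\<bar>"
  using norm_Pair_le[of a "(b, c)"] norm_Pair_le[of b c] by simp

lemma inner_triple:
  "(u :: real \<times> real \<times> real) \<bullet> h = fst u * fst h + fst (snd u) * fst (snd h) + snd (snd u) * snd (snd h)"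
  by (cases u, cases h) (simp add: inner_Pair)

lemma eventually_nhds_of_isCont_less:
  fixes f :: "'a::t2_space \<Rightarrow> real"
  assumes "isCont f p" "f p < c" "\<And>q. f q < c \<Longrightarrow> P q" shows "eventually P (nhds p)"
  using order_tendstoD(2)[of f "f p" "nhds p" c] assms
  by (auto simp: isCont_def tendsto_at_iff_tendsto_nhds elim: eventually_mono)

lemma eventually_nhds_of_isCont_greater:
  fixes f :: "'a::t2_space \<Rightarrow> real"
  assumes "isCont f p" "c < f p" "\<And>q. c < f q \<Longrightarrow> P q" shows "eventually P (nhds p)"
  using order_tendstoD(1)[of f "f p" "nhds p" c] assms
  by (auto simp: isCont_def tendsto_at_iff_tendsto_nhds elim: eventually_mono)

lemma eventually_nhds_Pair_slice:
  assumes "eventually P (nhds (x, y))" shows "\<forall>\<^sub>F t in nhds y. P (x, t)"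
proof -
  have "filterlim (\<lambda>t. (x, t)) (nhds (x, y)) (nhds y)"
    by (rule tendsto_Pair[OF tendsto_const filterlim_ident])
  with assms show ?thesis by (simp add: filterlim_iff)
qed

lemma tendsto_zero_of_powr_bound:
  fixes f :: "'a::topological_space \<Rightarrow> 'b::real_normed_vector"
  assumes "(w \<longlongrightarrow> 0) F" "0 < \<delta>" "\<forall>\<^sub>F q in F. norm (f q) \<le> M * max (w q) 0 powr \<delta>"
  shows "(f \<longlongrightarrow> 0) F"
proof (rule Lim_null_comparison[OF assms(3)])
  have "((\<lambda>q. max (w q) 0) \<longlongrightarrow> max 0 0) F" by (intro tendsto_intros assms(1))
  then have "((\<lambda>q. max (w q) 0 powr \<delta>) \<longlongrightarrow> 0) F"
    by (intro tendsto_zero_powrI[OF _ tendsto_const _ assms(2)]) auto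
  then show "((\<lambda>q. M * max (w q) 0 powr \<delta>) \<longlongrightarrow> 0) F" by (rule tendsto_mult_right_zero)
qed

lemma has_derivative_zero_of_powr_bound:
  fixes f :: "'a::real_normed_vector \<Rightarrow> real"
  assumes "f x = 0" "0 < \<delta>" "\<forall>\<^sub>F y in nhds x. \<bar>f y\<bar> \<le> C * norm (y - x) powr (1 + \<delta>)"
  shows "(f has_derivative (\<lambda>h. 0)) (at x)"
  unfolding has_derivative_iff_norm
proof (intro conjI bounded_linear_zero)
  have "\<forall>\<^sub>F y in at x. norm (norm (f y - f x - 0) / norm (y - x)) \<le> C * norm (y - x) powr \<delta>"
    using assms(3) unfolding eventually_at_filter
  proof (elim eventually_mono, intro impI)
    fix y assume bound: "\<bar>f y\<bar> \<le> C * norm (y - x) powr (1 + \<delta>)" and "y \<noteq> x"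
    then have n: "0 < norm (y - x)" by simp
    have "\<bar>f y\<bar> / norm (y - x) \<le> C * norm (y - x) powr (1 + \<delta>) / norm (y - x)"
      using bound n by (simp add: divide_right_mono)
    also have "\<dots> = C * norm (y - x) powr \<delta>" using n by (simp add: powr_add)
    finally show "norm (norm (f y - f x - 0) / norm (y - x)) \<le> C * norm (y - x) powr \<delta>"
      by (simp add: assms(1))
  qed
  moreover have "((\<lambda>y. C * norm (y - x) powr \<delta>) \<longlongrightarrow> 0) (at x)"
    by (intro tendsto_mult_right_zero tendsto_zero_powrI[OF _ tendsto_const _ assms(2)])
       (auto intro!: tendsto_norm_zero LIM_zero tendsto_ident_at)
  ultimately show "((\<lambda>y. norm (f y - f x - 0) / norm (y - x)) \<longlongrightarrow> 0) (at x)"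
    by (rule Lim_null_comparison)
qed

section \<open>The GEV log-density and its gradient\<close>

definition gev_w :: "real \<Rightarrow> real \<Rightarrow> real \<Rightarrow> real \<Rightarrow> real" where
  "gev_w x g m s = 1 + g * ((x - m) / s)"

text \<open>\<open>gev_psi\<close> is \<open>- ln u\<close>, written through \<open>ln1p_ratio\<close> so that it is smooth across \<open>\<gamma> = 0\<close>.\<close>

definition gev_psi :: "real \<Rightarrow> real \<Rightarrow> real \<Rightarrow> real \<Rightarrow> real" where
  "gev_psi x g m s = (x - m) / s * ln1p_ratio (g * ((x - m) / s))"

definition gev_psi_dg :: "real \<Rightarrow> real \<Rightarrow> real \<Rightarrow> real \<Rightarrow> real" where
  "gev_psi_dg x g m s = ((x - m) / s)^2 * ln1p_ratio' (g * ((x - m) / s))"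

definition gev_psi_dz :: "real \<Rightarrow> real \<Rightarrow> real \<Rightarrow> real \<Rightarrow> real" where
  "gev_psi_dz x g m s =
     ln1p_ratio (g * ((x - m) / s)) + g * ((x - m) / s) * ln1p_ratio' (g * ((x - m) / s))"

definition gev_logdens :: "real \<Rightarrow> real \<Rightarrow> real \<Rightarrow> real \<Rightarrow> real" where
  "gev_logdens x g m s = - ln s - exp (- gev_psi x g m s) - (g + 1) * gev_psi x g m s"

definition gev_logdens_grad :: "real \<Rightarrow> real \<Rightarrow> real \<Rightarrow> real \<Rightarrow> real \<times> real \<times> real" where
  "gev_logdens_grad x g m s =
     (let c = exp (- gev_psi x g m s) - (g + 1)
      in (c * gev_psi_dg x g m s - gev_psi x g m s,
          - c * gev_psi_dz x g m s / s,
          - 1 / s - c * ((x - m) / s) * gev_psi_dz x g m s / s))"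

lemma has_derivative_gev_logdens:
  assumes "0 < s" "0 < gev_w x g m s"
  shows "((\<lambda>(g, m, s). gev_logdens x g m s) has_derivative (\<lambda>h. gev_logdens_grad x g m s \<bullet> h))
           (at (g, m, s))"
proof -
  have "((\<lambda>t. gev_logdens x (fst t) (fst (snd t)) (snd (snd t))) has_derivative
          (\<lambda>h. gev_logdens_grad x g m s \<bullet> h)) (at (g, m, s))"
    unfolding gev_logdens_def gev_psi_def using assms
    apply (auto intro!: derivative_eq_intros simp: gev_w_def)
    apply (auto simp: fun_eq_iff gev_logdens_grad_def gev_psi_def gev_psi_dg_def gev_psi_dz_def
        Let_def inner_Pair field_simps power2_eq_square)
    done
  then show ?thesis by (simp add: case_prod_unfold)
qed

lemma gev_psi_eq:
  assumes "g \<noteq> 0" shows "gev_psi x g m s = ln (gev_w x g m s) / g"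
proof -
  define y where "y = g * ((x - m) / s)"
  have "g * gev_psi x g m s = y * ln1p_ratio y" by (simp add: gev_psi_def y_def)
  also have "\<dots> = ln (gev_w x g m s)" by (simp add: ln1p_ratio_mult gev_w_def y_def)
  finally show ?thesis using assms by (simp add: field_simps)
qed

lemma gev_psi_dg_eq:
  assumes "g \<noteq> 0" "0 < gev_w x g m s"
  shows "gev_psi_dg x g m s = (1 - 1 / gev_w x g m s - ln (gev_w x g m s)) / g^2"
proof -
  define y where "y = g * ((x - m) / s)"
  have y: "-1 < y" "gev_w x g m s = 1 + y" using assms(2) by (simp_all add: gev_w_def y_def)
  have "g^2 * gev_psi_dg x g m s = y^2 * ln1p_ratio' y"
    unfolding gev_psi_dg_def y_def by (simp only: power_mult_distrib mult.assoc)
  also have "\<dots> = 1 - 1 / gev_w x g m s - ln (gev_w x g m s)" using y by (simp add: ln1p_ratio'_mult)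
  finally show ?thesis using assms(1) by (simp add: field_simps)
qed

lemma gev_psi_dz_eq:
  assumes "0 < gev_w x g m s" shows "gev_psi_dz x g m s = 1 / gev_w x g m s"
proof -
  define y where "y = g * ((x - m) / s)"
  have y: "-1 < y" "gev_w x g m s = 1 + y" using assms by (simp_all add: gev_w_def y_def)
  have "gev_psi_dz x g m s = ln1p_ratio y + y * ln1p_ratio' y" by (simp add: gev_psi_dz_def y_def)
  with y show ?thesis by (simp add: ln1p_ratio_add_ln1p_ratio')
qed

lemma abs_gev_psi_le:
  assumes g: "g \<noteq> 0" and w: "0 < gev_w x g m s" "gev_w x g m s < 1"
  shows "\<bar>gev_psi x g m s\<bar> \<le> 1 / gev_w x g m s / \<bar>g\<bar>"
    and "\<bar>gev_psi_dg x g m s\<bar> \<le> 3 * (1 / gev_w x g m s) / g^2"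
proof -
  define q where "q = 1 / gev_w x g m s"
  have q: "1 \<le> q" using w by (simp add: q_def)
  have lnw: "\<bar>ln (gev_w x g m s)\<bar> \<le> q" using abs_ln_le_inverse[OF w] by (simp add: q_def)
  show "\<bar>gev_psi x g m s\<bar> \<le> q / \<bar>g\<bar>"
    using lnw g by (simp add: gev_psi_eq[OF g] abs_div divide_right_mono)
  have "\<bar>gev_psi_dg x g m s\<bar> = \<bar>1 - q - ln (gev_w x g m s)\<bar> / g^2"
    by (simp add: gev_psi_dg_eq[OF g w(1)] abs_div q_def)
  also have "\<dots> \<le> 3 * q / g^2"
    using lnw q by (intro divide_right_mono) (auto simp: abs_le_iff)
  finally show "\<bar>gev_psi_dg x g m s\<bar> \<le> 3 * q / g^2" .
qed

definition gev_grad_bound :: "real \<Rightarrow> real \<Rightarrow> real \<Rightarrow> real \<Rightarrow> real" where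
  "gev_grad_bound x g m s = (\<bar>g\<bar> + 1) * (3 / g^2 + (1 + \<bar>(x - m) / s\<bar>) / s) + 1 / \<bar>g\<bar> + 1 / s"

lemma norm_gev_logdens_grad_le:
  assumes s: "0 < s" and g: "g \<noteq> 0" and w: "0 < gev_w x g m s" "gev_w x g m s < 1"
  shows "norm (gev_logdens_grad x g m s)
           \<le> (1 + exp (- gev_psi x g m s)) / gev_w x g m s * gev_grad_bound x g m s"
proof -
  define E where "E = exp (- gev_psi x g m s)"
  define c where "c = E - (g + 1)"
  define q where "q = 1 / gev_w x g m s"
  define G where "G = \<bar>g\<bar>"
  define z where "z = (x - m) / s"
  define Z where "Z = \<bar>z\<bar>"
  have q: "1 \<le> q" using w by (simp add: q_def)
  have E: "0 < E" by (simp add: E_def)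
  have G: "0 < G" using g by (simp add: G_def)
  have psi: "\<bar>gev_psi x g m s\<bar> \<le> q / G" and psi_dg: "\<bar>gev_psi_dg x g m s\<bar> \<le> 3 * q / G^2"
    using abs_gev_psi_le[OF g w] by (simp_all add: q_def G_def)
  have psi_dz: "gev_psi_dz x g m s = q" by (simp add: gev_psi_dz_eq[OF w(1)] q_def)
  have "\<bar>c\<bar> \<le> E + G + 1" using E by (auto simp: c_def G_def abs_if)
  moreover have "0 \<le> E * G" using E G by simp
  ultimately have c: "\<bar>c\<bar> \<le> (1 + E) * (G + 1)" by (simp add: algebra_simps)
  have "norm (gev_logdens_grad x g m s)
          = norm (c * gev_psi_dg x g m s - gev_psi x g m s, - c * q / s, - 1 / s - c * z * q / s)"
    unfolding gev_logdens_grad_def Let_def E_def[symmetric] c_def[symmetric] psi_dz z_def ..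
  also have "\<dots> \<le> \<bar>c\<bar> * \<bar>gev_psi_dg x g m s\<bar> + \<bar>c\<bar> * (q / s) + \<bar>c\<bar> * (Z * q / s)
                 + \<bar>gev_psi x g m s\<bar> + 1 / s"
  proof -
    have "\<bar>c * gev_psi_dg x g m s - gev_psi x g m s\<bar> \<le> \<bar>c\<bar> * \<bar>gev_psi_dg x g m s\<bar> + \<bar>gev_psi x g m s\<bar>"
      by (metis abs_mult abs_triangle_ineq4)
    moreover have "\<bar>- c * q / s\<bar> = \<bar>c\<bar> * (q / s)" using s q by (simp add: abs_mult)
    moreover have "\<bar>- 1 / s - c * z * q / s\<bar> \<le> 1 / s + \<bar>c\<bar> * (Z * q / s)"
      using s q abs_triangle_ineq4[of "- 1 / s" "c * z * q / s"] by (simp add: abs_mult Z_def)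
    ultimately show ?thesis
      using norm_triple_le[of "c * gev_psi_dg x g m s - gev_psi x g m s" "- c * q / s" "- 1 / s - c * z * q / s"]
      by linarith
  qed
  also have "\<dots> \<le> (1 + E) * (G + 1) * (3 * q / G^2) + (1 + E) * (G + 1) * (q / s)
                 + (1 + E) * (G + 1) * (Z * q / s) + (1 + E) * (q / G) + (1 + E) * (q / s)"
  proof -
    have "\<bar>c\<bar> * \<bar>gev_psi_dg x g m s\<bar> \<le> (1 + E) * (G + 1) * (3 * q / G^2)"
      using c psi_dg E G by (intro mult_mono) auto
    moreover have "\<bar>c\<bar> * (q / s) \<le> (1 + E) * (G + 1) * (q / s)"
      using c s q by (intro mult_right_mono) auto
    moreover have "\<bar>c\<bar> * (Z * q / s) \<le> (1 + E) * (G + 1) * (Z * q / s)"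
      using c s q by (intro mult_right_mono) (auto simp: Z_def)
    moreover have "1 * (q / G) \<le> (1 + E) * (q / G)"
      using E G q by (intro mult_right_mono) auto
    moreover have "1 / s \<le> (1 + E) * (q / s)"
    proof -
      have "1 * 1 \<le> (1 + E) * q" using E q by (intro mult_mono) auto
      then show ?thesis using s by (simp add: divide_right_mono)
    qed
    ultimately show ?thesis using psi by linarith
  qed
  also have "\<dots> = (1 + E) * q * gev_grad_bound x g m s"
    using s by (simp add: gev_grad_bound_def G_def Z_def z_def abs_div field_simps)
  finally show ?thesis by (simp add: E_def q_def)
qed

lemma gev_u_eq_exp_psi:
  assumes "0 < gev_w x g m s" shows "gev_u g m s x = exp (- gev_psi x g m s)"
proof (cases "g = 0")
  case True
  then show ?thesis by (simp add: gev_u_def gev_psi_def ln1p_ratio_def)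
next
  case False
  with assms show ?thesis
    by (simp add: gev_u_def gev_psi_eq powr_def) (simp add: gev_w_def)
qed

lemma gev_density_powr_eq_exp:
  assumes "0 < s" "0 < gev_w x g m s"
  shows "gev_density (g, m, s) x powr a = exp (a * gev_logdens x g m s)"
proof -
  define P where "P = gev_psi x g m s"
  have w: "0 < 1 + g * ((x - m) / s)" using assms(2) by (simp add: gev_w_def)
  have "gev_density (g, m, s) x = 1 / s * exp (- exp (- P)) * exp (- P) powr (g + 1)"
    using w by (simp add: gev_density_def Let_def gev_u_eq_exp_psi[OF assms(2)] P_def)
  also have "1 / s = exp (- ln s)" using assms(1) by (simp add: exp_minus inverse_eq_divide)
  also have "exp (- P) powr (g + 1) = exp (- ((g + 1) * P))" by (simp add: powr_def)
  also have "exp (- ln s) * exp (- exp (- P)) * exp (- ((g + 1) * P)) = exp (gev_logdens x g m s)"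
    by (simp add: mult_exp_exp gev_logdens_def P_def)
  finally show ?thesis by (simp add: powr_def)
qed

lemma gev_density_eq_0:
  assumes "\<not> 0 < gev_w x g m s" shows "gev_density (g, m, s) x = 0"
  using assms by (simp add: gev_density_def gev_w_def Let_def)

definition gev_powr_grad :: "real \<Rightarrow> real \<Rightarrow> real \<times> real \<times> real \<Rightarrow> real \<times> real \<times> real" where
  "gev_powr_grad a x \<theta> = (case \<theta> of (g, m, s) \<Rightarrow>
     if 0 < s \<and> 0 < gev_w x g m s
     then (a * exp (a * gev_logdens x g m s)) *\<^sub>R gev_logdens_grad x g m s else 0)"

section \<open>Decay at the boundary of the support\<close>

lemma abs_gev_w_le_dist:
  assumes s: "0 < s" and s0: "0 < s0" and w0: "gev_w x g0 m0 s0 = 0"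
  shows "\<bar>gev_w x g m s\<bar> \<le> (1 + \<bar>x - m\<bar> + \<bar>g0\<bar>) / s * norm ((g, m, s) - (g0, m0, s0))"
proof -
  define n where "n = norm ((g, m, s) - (g0, m0, s0))"
  have "norm (m - m0, s - s0) \<le> n"
    using norm_snd_le[of "(m - m0, s - s0)" "g - g0"] by (simp add: n_def)
  then have n: "\<bar>g - g0\<bar> \<le> n" "\<bar>m - m0\<bar> \<le> n" "\<bar>s - s0\<bar> \<le> n"
    using norm_fst_le[of "g - g0" "(m - m0, s - s0)"]
      norm_fst_le[of "m - m0" "s - s0"] norm_snd_le[of "s - s0" "m - m0"]
    by (simp_all add: n_def)
  have "s0 + g0 * (x - m0) = 0" using w0 s0 by (simp add: gev_w_def field_simps)
  then have "s + g * (x - m) = (s - s0) + (g - g0) * (x - m) - g0 * (m - m0)"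
    by (simp add: algebra_simps)
  also have "\<bar>\<dots>\<bar> \<le> \<bar>s - s0\<bar> + \<bar>g - g0\<bar> * \<bar>x - m\<bar> + \<bar>g0\<bar> * \<bar>m - m0\<bar>"
    by (simp add: abs_mult[symmetric])
  also have "\<dots> \<le> n + n * \<bar>x - m\<bar> + \<bar>g0\<bar> * n"
    using n by (intro add_mono mult_right_mono mult_left_mono) auto
  finally have "\<bar>s + g * (x - m)\<bar> \<le> (1 + \<bar>x - m\<bar> + \<bar>g0\<bar>) * n" by (simp add: algebra_simps)
  moreover have "\<bar>gev_w x g m s\<bar> = \<bar>s + g * (x - m)\<bar> / s"
    using s by (simp add: gev_w_def abs_div field_simps)
  ultimately show ?thesis using s by (simp add: n_def divide_right_mono)
qed

lemma gev_w_lipschitz_at_zero: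
  assumes s0: "0 < s0" and w0: "gev_w x g0 m0 s0 = 0"
  obtains L where "0 < L"
    "\<forall>\<^sub>F (g, m, s) in nhds (g0, m0, s0). \<bar>gev_w x g m s\<bar> \<le> L * norm ((g, m, s) - (g0, m0, s0))"
proof -
  define Lc where "Lc = (\<lambda>m s. (1 + \<bar>x - m\<bar> + \<bar>g0\<bar>) / s)"
  define L where "L = Lc m0 s0 + 1"
  have "\<forall>\<^sub>F (g, m, s) in nhds (g0, m0, s0). 0 < s \<and> Lc m s < L"
    by (rule eventually_nhds_of_isCont_less[where c = 0
          and f = "\<lambda>(g::real, m, s). max (- s) (Lc m s - L)"])
       (use s0 in \<open>auto simp: case_prod_unfold L_def Lc_def intro!: continuous_intros\<close>)
  then have "\<forall>\<^sub>F (g, m, s) in nhds (g0, m0, s0). \<bar>gev_w x g m s\<bar> \<le> L * norm ((g, m, s) - (g0, m0, s0))"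
  proof eventually_elim
    case (elim t)
    obtain g m s where t: "t = (g, m, s)" by (cases t)
    with elim have s: "0 < s" and L: "Lc m s \<le> L" by auto
    have "\<bar>gev_w x g m s\<bar> \<le> Lc m s * norm ((g, m, s) - (g0, m0, s0))"
      using abs_gev_w_le_dist[OF s s0 w0] by (simp add: Lc_def)
    also have "\<dots> \<le> L * norm ((g, m, s) - (g0, m0, s0))" using L by (rule mult_right_mono) simp
    finally show ?case by (simp add: t)
  qed
  moreover have "0 < L" using s0 by (simp add: L_def Lc_def add_pos_nonneg)
  ultimately show ?thesis using that by blast
qed

lemma gev_decay_neg:
  assumes a: "0 < a" and s: "0 < s" and g: "g < 0"
    and w: "0 < gev_w x g m s" "gev_w x g m s < 1" and \<delta>: "1 + \<delta> \<le> - a * (g + 1) / g"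
  shows "exp (a * gev_logdens x g m s) * ((1 + exp (- gev_psi x g m s)) / gev_w x g m s)
           \<le> 2 * s powr (- a) * gev_w x g m s powr \<delta>"
proof -
  define w where "w = gev_w x g m s"
  define E where "E = exp (- gev_psi x g m s)"
  define c where "c = - a * (g + 1) / g"
  have lnw: "ln w < 0" using w by (simp add: w_def)
  have psi: "gev_psi x g m s = ln w / g" using g w by (simp add: gev_psi_eq w_def)
  have E: "0 < E" "E \<le> 1" using lnw g by (simp_all add: E_def psi divide_neg_neg less_imp_le)
  have "a * gev_logdens x g m s = - a * ln s - a * E + c * ln w"
    using g by (simp add: gev_logdens_def E_def psi c_def field_simps)
  then have "exp (a * gev_logdens x g m s) \<le> exp (- a * ln s + c * ln w)"
    using a E by simp
  moreover have "(1 + E) / w \<le> 2 * exp (- ln w)"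
    using w E by (simp add: w_def exp_minus divide_right_mono field_simps)
  ultimately have "exp (a * gev_logdens x g m s) * ((1 + E) / w)
      \<le> exp (- a * ln s + c * ln w) * (2 * exp (- ln w))"
    using w E by (intro mult_mono) (auto simp: w_def)
  also have "\<dots> = 2 * exp (- a * ln s + (c - 1) * ln w)"
    by (simp add: mult_exp_exp algebra_simps)
  also have "\<dots> \<le> 2 * exp (- a * ln s + \<delta> * ln w)"
    using \<delta> lnw by (simp add: c_def mult_right_mono_neg)
  also have "\<dots> = 2 * s powr (- a) * w powr \<delta>"
    using s w by (simp add: w_def powr_def mult_exp_exp algebra_simps)
  finally show ?thesis by (simp add: w_def E_def)
qed

definition gev_decay_const :: "real \<Rightarrow> real \<Rightarrow> real" where
  "gev_decay_const a g = (a * (g + 1) + 1 + 2 * g) * ln ((a * (g + 1) + 1 + 2 * g) / a)"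

lemma gev_decay_pos:
  assumes a: "0 < a" and s: "0 < s" and g: "0 < g"
    and w: "0 < gev_w x g m s" "gev_w x g m s < 1"
  shows "exp (a * gev_logdens x g m s) * ((1 + exp (- gev_psi x g m s)) / gev_w x g m s)
           \<le> 2 * s powr (- a) * exp (gev_decay_const a g) * gev_w x g m s"
proof -
  define w where "w = gev_w x g m s"
  define v where "v = - gev_psi x g m s"
  define N where "N = a * (g + 1) + 1 + 2 * g"
  have lnw: "ln w = - g * v" using g w by (simp add: v_def gev_psi_eq w_def)
  have "ln w < 0" using w by (simp add: w_def)
  then have v: "0 < v" using g by (simp add: lnw zero_less_mult_iff)
  have N: "0 < N" using a g by (simp add: N_def add_pos_pos)
  have key: "- a * exp v + N * v \<le> gev_decay_const a g"
    using linear_minus_exp_le[OF a N, of v] by (simp add: gev_decay_const_def N_def)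
  have "exp (g * v) = exp (- ln w)" by (simp add: lnw)
  then have inv_w: "1 / w = exp (g * v)" using w by (simp add: w_def exp_minus inverse_eq_divide)
  have "a * gev_logdens x g m s = - a * ln s - a * exp v + a * (g + 1) * v"
    by (simp add: gev_logdens_def v_def algebra_simps)
  then have "exp (a * gev_logdens x g m s) * ((1 + exp v) / w)
      = exp (- a * ln s - a * exp v + a * (g + 1) * v) * (1 / w) * (1 + exp v)"
    by simp
  also have "\<dots> = exp (- a * ln s) * exp (- a * exp v + N * v) * ((1 + exp v) * exp (- v)) * exp (- g * v)"
  proof -
    have "exp (- a * ln s) * exp (- a * exp v + N * v) * exp (- v) * exp (- g * v)
        = exp (- a * ln s - a * exp v + a * (g + 1) * v) * exp (g * v)"
      unfolding mult_exp_exp by (simp add: N_def algebra_simps)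
    then show ?thesis unfolding inv_w by (simp add: mult_ac)
  qed
  also have "\<dots> \<le> exp (- a * ln s) * exp (gev_decay_const a g) * 2 * exp (- g * v)"
  proof -
    have "(1 + exp v) * exp (- v) \<le> 2" using v by (simp add: exp_minus field_simps)
    with key show ?thesis by (intro mult_right_mono mult_left_mono mult_mono) auto
  qed
  also have "exp (- g * v) = exp (ln w)" by (simp add: lnw)
  also have "exp (- a * ln s) * exp (gev_decay_const a g) * 2 * exp (ln w)
      = 2 * s powr (- a) * exp (gev_decay_const a g) * w"
    using s w by (simp add: powr_def w_def)
  finally show ?thesis by (simp add: v_def w_def)
qed

lemma gev_decay_near_boundary_neg:
  assumes a: "0 < a" and g0: "- a / (1 + a) < g0" "g0 < 0" and s0: "0 < s0"
  obtains \<delta> K where "0 < \<delta>" "0 \<le> K"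
    "\<forall>\<^sub>F (x, g, m, s) in nhds (x0, g0, m0, s0). g \<noteq> 0 \<and>
       (0 < s \<longrightarrow> 0 < gev_w x g m s \<longrightarrow> gev_w x g m s < 1 \<longrightarrow>
          exp (a * gev_logdens x g m s) * ((1 + exp (- gev_psi x g m s)) / gev_w x g m s)
            \<le> K * gev_w x g m s powr \<delta>)"
proof -
  define c where "c = (\<lambda>g::real. - a * (g + 1) / g)"
  have "- a * (g0 + 1) < g0" using g0(1) a by (simp add: field_simps)
  then have c0: "1 < c g0" using g0(2) by (simp add: c_def field_simps)
  define \<delta> where "\<delta> = (c g0 - 1) / 2"
  define K where "K = 2 * s0 powr (- a) + 1"
  have "1 + \<delta> - c g0 < 0" "2 * s0 powr (- a) - K < 0" using c0 by (simp_all add: \<delta>_def K_def field_simps)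
  then have "\<forall>\<^sub>F (x, g, m, s) in nhds (x0, g0, m0, s0). g < 0 \<and> 1 + \<delta> < c g \<and> 2 * s powr (- a) < K"
    using g0(2)
    by (intro eventually_nhds_of_isCont_less[where c = 0
          and f = "\<lambda>(x::real, g, m::real, s). max (max g (1 + \<delta> - c g)) (2 * s powr (- a) - K)"])
       (use s0 in \<open>auto simp: case_prod_unfold c_def intro!: continuous_intros\<close>)
  then have "\<forall>\<^sub>F (x, g, m, s) in nhds (x0, g0, m0, s0). g \<noteq> 0 \<and>
       (0 < s \<longrightarrow> 0 < gev_w x g m s \<longrightarrow> gev_w x g m s < 1 \<longrightarrow>
          exp (a * gev_logdens x g m s) * ((1 + exp (- gev_psi x g m s)) / gev_w x g m s)
            \<le> K * gev_w x g m s powr \<delta>)"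
  proof eventually_elim
    case (elim q)
    obtain x g m s where q: "q = (x, g, m, s)" by (cases q)
    with elim have g: "g < 0" "1 + \<delta> \<le> - a * (g + 1) / g" and K: "2 * s powr (- a) \<le> K"
      by (auto simp: c_def)
    have "exp (a * gev_logdens x g m s) * ((1 + exp (- gev_psi x g m s)) / gev_w x g m s)
            \<le> K * gev_w x g m s powr \<delta>" if "0 < s" "0 < gev_w x g m s" "gev_w x g m s < 1"
      using gev_decay_neg[OF a that(1) g(1) that(2,3) g(2)]
        mult_right_mono[OF K, of "gev_w x g m s powr \<delta>"] by simp
    with g show ?case by (simp add: q)
  qed
  moreover have "0 < \<delta>" "0 \<le> K" using c0 by (simp_all add: \<delta>_def K_def)
  ultimately show ?thesis using that by blast
qed

lemma gev_decay_near_boundary_pos: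
  assumes a: "0 < a" and g0: "0 < g0" and s0: "0 < s0"
  obtains \<delta> K where "0 < \<delta>" "0 \<le> K"
    "\<forall>\<^sub>F (x, g, m, s) in nhds (x0, g0, m0, s0). g \<noteq> 0 \<and>
       (0 < s \<longrightarrow> 0 < gev_w x g m s \<longrightarrow> gev_w x g m s < 1 \<longrightarrow>
          exp (a * gev_logdens x g m s) * ((1 + exp (- gev_psi x g m s)) / gev_w x g m s)
            \<le> K * gev_w x g m s powr \<delta>)"
proof -
  define K where "K = 2 * s0 powr (- a) * exp (gev_decay_const a g0) + 1"
  have "0 < a * (g0 + 1) + 1 + 2 * g0" using a g0 by (simp add: add_pos_pos)
  then have "\<forall>\<^sub>F (x, g, m, s) in nhds (x0, g0, m0, s0). 0 < g \<and> 2 * s powr (- a) * exp (gev_decay_const a g) < K"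
    by (intro eventually_nhds_of_isCont_less[where c = 0
          and f = "\<lambda>(x::real, g, m::real, s). max (- g) (2 * s powr (- a) * exp (gev_decay_const a g) - K)"])
       (use s0 a g0 in \<open>auto simp: case_prod_unfold K_def gev_decay_const_def intro!: continuous_intros\<close>)
  then have "\<forall>\<^sub>F (x, g, m, s) in nhds (x0, g0, m0, s0). g \<noteq> 0 \<and>
       (0 < s \<longrightarrow> 0 < gev_w x g m s \<longrightarrow> gev_w x g m s < 1 \<longrightarrow>
          exp (a * gev_logdens x g m s) * ((1 + exp (- gev_psi x g m s)) / gev_w x g m s)
            \<le> K * gev_w x g m s powr 1)"
  proof eventually_elim
    case (elim q)
    obtain x g m s where q: "q = (x, g, m, s)" by (cases q)
    with elim have g: "0 < g" and K: "2 * s powr (- a) * exp (gev_decay_const a g) \<le> K" by auto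
    have "exp (a * gev_logdens x g m s) * ((1 + exp (- gev_psi x g m s)) / gev_w x g m s)
            \<le> K * gev_w x g m s powr 1" if "0 < s" "0 < gev_w x g m s" "gev_w x g m s < 1"
      using order.trans[OF gev_decay_pos[OF a that(1) g that(2,3)] mult_right_mono[OF K]] that
      by simp
    with g show ?case by (simp add: q)
  qed
  moreover have "0 < (1::real)" "0 \<le> K" by (simp_all add: K_def add_nonneg_nonneg)
  ultimately show ?thesis using that by blast
qed

lemma gev_decay_near_boundary:
  assumes a: "0 < a" and g0: "- a / (1 + a) < g0" "g0 \<noteq> 0" and s0: "0 < s0"
  obtains \<delta> K where "0 < \<delta>" "0 \<le> K"
    "\<forall>\<^sub>F (x, g, m, s) in nhds (x0, g0, m0, s0). g \<noteq> 0 \<and>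
       (0 < s \<longrightarrow> 0 < gev_w x g m s \<longrightarrow> gev_w x g m s < 1 \<longrightarrow>
          exp (a * gev_logdens x g m s) * ((1 + exp (- gev_psi x g m s)) / gev_w x g m s)
            \<le> K * gev_w x g m s powr \<delta>)"
proof (cases "g0 < 0")
  case True
  show ?thesis by (rule gev_decay_near_boundary_neg[OF a g0(1) True s0]) (rule that)
next
  case False
  with g0(2) have "0 < g0" by simp
  from gev_decay_near_boundary_pos[OF a this s0] that show ?thesis by blast
qed

lemma gev_powr_bounds_of_decay:
  assumes a: "0 < a" and s: "0 < s" and g: "g \<noteq> 0" and w: "0 < gev_w x g m s" "gev_w x g m s < 1"
    and decay: "exp (a * gev_logdens x g m s) * ((1 + exp (- gev_psi x g m s)) / gev_w x g m s)
                  \<le> K * gev_w x g m s powr \<delta>"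
  shows "gev_density (g, m, s) x powr a \<le> K * gev_w x g m s powr (1 + \<delta>)"
    and "norm (gev_powr_grad a x (g, m, s)) \<le> a * K * gev_grad_bound x g m s * gev_w x g m s powr \<delta>"
proof -
  define w where "w = gev_w x g m s"
  define F where "F = exp (a * gev_logdens x g m s)"
  define E where "E = exp (- gev_psi x g m s)"
  have pos: "0 < F" "0 < E" "0 < w" using w by (simp_all add: F_def E_def w_def)
  have decay: "F * ((1 + E) / w) \<le> K * w powr \<delta>" using decay by (simp add: F_def E_def w_def)
  have "F \<le> F * ((1 + E) / w) * w" using pos by (simp add: field_simps)
  also have "\<dots> \<le> K * w powr \<delta> * w" by (rule mult_right_mono[OF decay]) (use pos in simp)
  also have "\<dots> = K * w powr (1 + \<delta>)" using pos by (simp add: powr_add)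
  finally show "gev_density (g, m, s) x powr a \<le> K * gev_w x g m s powr (1 + \<delta>)"
    using s w by (simp add: gev_density_powr_eq_exp F_def w_def)
  have "norm (gev_powr_grad a x (g, m, s)) = a * F * norm (gev_logdens_grad x g m s)"
    using s w a by (simp add: gev_powr_grad_def F_def)
  also have "\<dots> \<le> a * F * ((1 + E) / w * gev_grad_bound x g m s)"
    using norm_gev_logdens_grad_le[OF s g w] a pos
    by (intro mult_left_mono) (simp_all add: w_def E_def)
  also have "\<dots> = a * (F * ((1 + E) / w)) * gev_grad_bound x g m s" by simp
  also have "\<dots> \<le> a * (K * w powr \<delta>) * gev_grad_bound x g m s"
    using decay a s by (intro mult_right_mono mult_left_mono) (auto simp: gev_grad_bound_def)
  finally show "norm (gev_powr_grad a x (g, m, s)) \<le> a * K * gev_grad_bound x g m s * gev_w x g m s powr \<delta>"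
    by (simp add: w_def mult_ac)
qed

lemma gev_boundary_decay:
  assumes a: "0 < a" and s0: "0 < s0" and g0: "- a / (1 + a) < g0" and w0: "gev_w x0 g0 m0 s0 = 0"
  obtains \<delta> M where "0 < \<delta>" "0 \<le> M"
    "\<forall>\<^sub>F (x, g, m, s) in nhds (x0, g0, m0, s0).
       gev_density (g, m, s) x powr a \<le> M * max (gev_w x g m s) 0 powr (1 + \<delta>) \<and>
       norm (gev_powr_grad a x (g, m, s)) \<le> M * max (gev_w x g m s) 0 powr \<delta>"
proof -
  let ?p0 = "(x0, g0, m0, s0)"
  have "g0 \<noteq> 0" using w0 by (auto simp: gev_w_def)
  obtain \<delta> K where \<delta>: "0 < \<delta>" and K: "0 \<le> K" and decay:
    "\<forall>\<^sub>F (x, g, m, s) in nhds ?p0. g \<noteq> 0 \<and>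
       (0 < s \<longrightarrow> 0 < gev_w x g m s \<longrightarrow> gev_w x g m s < 1 \<longrightarrow>
          exp (a * gev_logdens x g m s) * ((1 + exp (- gev_psi x g m s)) / gev_w x g m s)
            \<le> K * gev_w x g m s powr \<delta>)"
    by (rule gev_decay_near_boundary[OF a g0 \<open>g0 \<noteq> 0\<close> s0])
  define B where "B = gev_grad_bound x0 g0 m0 s0 + 1"
  have "\<forall>\<^sub>F (x, g, m, s) in nhds ?p0. max (- s) (max (gev_w x g m s - 1) (gev_grad_bound x g m s - B)) < 0"
    by (rule eventually_nhds_of_isCont_less[where c = 0
          and f = "\<lambda>(x, g, m, s). max (- s) (max (gev_w x g m s - 1) (gev_grad_bound x g m s - B))"])
       (use s0 w0 \<open>g0 \<noteq> 0\<close> in \<open>auto simp: case_prod_unfold B_def gev_w_def gev_grad_bound_def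
          intro!: continuous_intros\<close>)
  moreover have B: "0 \<le> B" using s0 by (simp add: B_def gev_grad_bound_def)
  define M where "M = (1 + a * B) * K"
  have M: "0 \<le> M" "K \<le> M" "a * K * B \<le> M" using a B K by (simp_all add: M_def algebra_simps)
  have "\<forall>\<^sub>F (x, g, m, s) in nhds ?p0.
       gev_density (g, m, s) x powr a \<le> M * max (gev_w x g m s) 0 powr (1 + \<delta>) \<and>
       norm (gev_powr_grad a x (g, m, s)) \<le> M * max (gev_w x g m s) 0 powr \<delta>"
    using decay calculation
  proof eventually_elim
    case (elim q)
    obtain x g m s where q: "q = (x, g, m, s)" by (cases q)
    with elim have s: "0 < s" and g: "g \<noteq> 0" and w: "gev_w x g m s < 1"
      and bnd: "gev_grad_bound x g m s \<le> B" by auto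
    show ?case
    proof (cases "0 < gev_w x g m s")
      case True
      with elim s w have "exp (a * gev_logdens x g m s) * ((1 + exp (- gev_psi x g m s)) / gev_w x g m s)
          \<le> K * gev_w x g m s powr \<delta>" by (simp add: q)
      note bounds = gev_powr_bounds_of_decay[OF a s g True w this]
      have "a * K * gev_grad_bound x g m s \<le> a * K * B" using bnd a K by (intro mult_left_mono) auto
      with M(3) have "a * K * gev_grad_bound x g m s \<le> M" by linarith
      then have "a * K * gev_grad_bound x g m s * gev_w x g m s powr \<delta> \<le> M * gev_w x g m s powr \<delta>"
        by (rule mult_right_mono) simp
      moreover have "K * gev_w x g m s powr (1 + \<delta>) \<le> M * gev_w x g m s powr (1 + \<delta>)"
        using M(2) by (rule mult_right_mono) simp
      ultimately show ?thesis
        using order.trans[OF bounds(1)] order.trans[OF bounds(2)] True by (simp add: q)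
    next
      case False
      then show ?thesis using M by (simp add: q gev_density_eq_0 gev_powr_grad_def)
    qed
  qed
  with \<delta> M(1) show ?thesis using that by blast
qed

section \<open>Differentiability and continuity of the gradient\<close>

lemma has_derivative_gev_density_powr_interior:
  assumes s: "0 < s" and w: "0 < gev_w x g m s"
  shows "((\<lambda>t. gev_density t x powr a) has_derivative (\<lambda>h. gev_powr_grad a x (g, m, s) \<bullet> h))
           (at (g, m, s))"
proof -
  have "(\<lambda>h. (gev_logdens_grad x g m s \<bullet> h) * (exp (a * gev_logdens x g m s) * a))
      = (\<lambda>h. gev_powr_grad a x (g, m, s) \<bullet> h)"
    using s w by (simp add: gev_powr_grad_def fun_eq_iff)
  moreover have "((\<lambda>t. exp (a * (case t of (g, m, s) \<Rightarrow> gev_logdens x g m s))) has_derivative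
      (\<lambda>h. (gev_logdens_grad x g m s \<bullet> h) * (exp (a * gev_logdens x g m s) * a))) (at (g, m, s))"
    by (rule DERIV_compose_FDERIV[where g = "\<lambda>(g, m, s). gev_logdens x g m s",
          OF _ has_derivative_gev_logdens[OF s w]])
       (auto intro!: derivative_eq_intros)
  ultimately have D: "((\<lambda>t. exp (a * (case t of (g, m, s) \<Rightarrow> gev_logdens x g m s))) has_derivative
      (\<lambda>h. gev_powr_grad a x (g, m, s) \<bullet> h)) (at (g, m, s))"
    by (simp only:)
  have "\<forall>\<^sub>F (g, m, s) in nhds (g, m, s). 0 < min s (gev_w x g m s)"
    by (rule eventually_nhds_of_isCont_greater[where c = 0 and f = "\<lambda>(g, m, s). min s (gev_w x g m s)"])
       (use s w in \<open>auto simp: case_prod_unfold gev_w_def intro!: continuous_intros\<close>)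
  then have "\<forall>\<^sub>F t in nhds (g, m, s).
      exp (a * (case t of (g, m, s) \<Rightarrow> gev_logdens x g m s)) = gev_density t x powr a"
  proof eventually_elim
    case (elim t)
    obtain g' m' s' where t: "t = (g', m', s')" by (cases t)
    with elim show ?case by (simp add: gev_density_powr_eq_exp)
  qed
  then show ?thesis
    using s w by (intro has_derivative_transform_eventually[OF D] filter_leD[OF at_within_le_nhds])
      (simp_all add: gev_density_powr_eq_exp)
qed

lemma has_derivative_gev_density_powr_exterior:
  assumes s: "0 < s" and w: "gev_w x g m s < 0"
  shows "((\<lambda>t. gev_density t x powr a) has_derivative (\<lambda>h. 0)) (at (g, m, s))"
proof -
  have "\<forall>\<^sub>F (g, m, s) in nhds (g, m, s). gev_w x g m s < 0"
    by (rule eventually_nhds_of_isCont_less[where c = 0 and f = "\<lambda>(g, m, s). gev_w x g m s"])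
       (use s w in \<open>auto simp: case_prod_unfold gev_w_def intro!: continuous_intros\<close>)
  then have "\<forall>\<^sub>F t in nhds (g, m, s). 0 = gev_density t x powr a"
  proof eventually_elim
    case (elim t)
    obtain g' m' s' where t: "t = (g', m', s')" by (cases t)
    with elim show ?case by (simp add: gev_density_eq_0)
  qed
  then show ?thesis
    using w by (intro has_derivative_transform_eventually[OF has_derivative_const] filter_leD[OF at_within_le_nhds])
      (simp_all add: gev_density_eq_0)
qed

lemma has_derivative_gev_density_powr_boundary:
  assumes a: "0 < a" and s: "0 < s" and g: "- a / (1 + a) < g" and w: "gev_w x g m s = 0"
  shows "((\<lambda>t. gev_density t x powr a) has_derivative (\<lambda>h. 0)) (at (g, m, s))"
proof -
  let ?\<theta> = "(g, m, s)"
  obtain \<delta> M where \<delta>: "0 < \<delta>" and M: "0 \<le> M" and ev: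
    "\<forall>\<^sub>F (x', g, m, s) in nhds (x, ?\<theta>). gev_density (g, m, s) x' powr a \<le> M * max (gev_w x' g m s) 0 powr (1 + \<delta>) \<and>
       norm (gev_powr_grad a x' (g, m, s)) \<le> M * max (gev_w x' g m s) 0 powr \<delta>"
    by (rule gev_boundary_decay[OF a s g w])
  obtain L where L: "0 < L" and lip:
    "\<forall>\<^sub>F (g', m', s') in nhds ?\<theta>. \<bar>gev_w x g' m' s'\<bar> \<le> L * norm ((g', m', s') - ?\<theta>)"
    by (rule gev_w_lipschitz_at_zero[OF s w])
  have "\<forall>\<^sub>F t in nhds ?\<theta>. \<bar>gev_density t x powr a\<bar> \<le> M * L powr (1 + \<delta>) * norm (t - ?\<theta>) powr (1 + \<delta>)"
    using eventually_nhds_Pair_slice[OF ev] lip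
  proof eventually_elim
    case (elim t)
    obtain g' m' s' where t: "t = (g', m', s')" by (cases t)
    from elim have dens: "gev_density t x powr a \<le> M * max (gev_w x g' m' s') 0 powr (1 + \<delta>)"
      and w': "max (gev_w x g' m' s') 0 \<le> L * norm (t - ?\<theta>)"
      using L by (auto simp: t)
    have "max (gev_w x g' m' s') 0 powr (1 + \<delta>) \<le> (L * norm (t - ?\<theta>)) powr (1 + \<delta>)"
      using w' \<delta> by (intro powr_mono2) auto
    also have "\<dots> = L powr (1 + \<delta>) * norm (t - ?\<theta>) powr (1 + \<delta>)" using L by (simp add: powr_mult)
    finally have "M * max (gev_w x g' m' s') 0 powr (1 + \<delta>)
        \<le> M * (L powr (1 + \<delta>) * norm (t - ?\<theta>) powr (1 + \<delta>))"
      using M by (rule mult_left_mono)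
    with dens show ?case by (simp add: mult.assoc)
  qed
  then show ?thesis
    by (rule has_derivative_zero_of_powr_bound[rotated 2]) (use w \<delta> in \<open>simp_all add: gev_density_eq_0\<close>)
qed

lemma has_derivative_gev_density_powr:
  assumes a: "0 < a" and \<theta>: "\<theta> \<in> Theta_a a"
  shows "((\<lambda>t. gev_density t x powr a) has_derivative (\<lambda>h. gev_powr_grad a x \<theta> \<bullet> h)) (at \<theta>)"
proof -
  obtain g m s where \<theta>_eq: "\<theta> = (g, m, s)" by (cases \<theta>)
  from \<theta> have s: "0 < s" and g: "- a / (1 + a) < g" by (auto simp: \<theta>_eq Theta_a_def)
  consider "0 < gev_w x g m s" | "gev_w x g m s < 0" | "gev_w x g m s = 0" by linarith
  then show ?thesis
  proof cases
    case 1
    show ?thesis unfolding \<theta>_eq by (rule has_derivative_gev_density_powr_interior[OF s 1])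
  next
    case 2
    with has_derivative_gev_density_powr_exterior[OF s 2] show ?thesis
      by (simp add: \<theta>_eq gev_powr_grad_def)
  next
    case 3
    with has_derivative_gev_density_powr_boundary[OF a s g 3] show ?thesis
      by (simp add: \<theta>_eq gev_powr_grad_def)
  qed
qed

lemma isCont_gev_powr_grad_interior:
  assumes s: "0 < s" and w: "0 < gev_w x g m s"
  shows "isCont (\<lambda>p. gev_powr_grad a (fst p) (snd p)) (x, g, m, s)"
proof -
  let ?F = "\<lambda>(x, g, m, s). (a * exp (a * gev_logdens x g m s)) *\<^sub>R gev_logdens_grad x g m s"
  have cont: "isCont ?F (x, g, m, s)"
    using s w unfolding case_prod_unfold gev_logdens_def gev_logdens_grad_def gev_psi_def
      gev_psi_dg_def gev_psi_dz_def Let_def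
    by (intro continuous_intros) (auto simp: gev_w_def)
  have "\<forall>\<^sub>F (x, g, m, s) in nhds (x, g, m, s). 0 < min s (gev_w x g m s)"
    by (rule eventually_nhds_of_isCont_greater[where c = 0 and f = "\<lambda>(x, g, m, s). min s (gev_w x g m s)"])
       (use s w in \<open>auto simp: case_prod_unfold gev_w_def intro!: continuous_intros\<close>)
  then have "\<forall>\<^sub>F q in nhds (x, g, m, s). gev_powr_grad a (fst q) (snd q) = ?F q"
  proof eventually_elim
    case (elim q)
    obtain x' g' m' s' where q: "q = (x', g', m', s')" by (cases q)
    with elim show ?case by (simp add: gev_powr_grad_def)
  qed
  from isCont_cong[OF this] cont show ?thesis by (rule iffD2)
qed

lemma isCont_gev_powr_grad:
  assumes a: "0 < a" and s: "0 < s" and g: "- a / (1 + a) < g"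
  shows "isCont (\<lambda>p. gev_powr_grad a (fst p) (snd p)) (x, g, m, s)"
proof -
  let ?G = "\<lambda>p. gev_powr_grad a (fst p) (snd p)"
  have cont_w: "isCont (\<lambda>(x, g, m, s). gev_w x g m s) (x, g, m, s)"
    using s by (auto simp: case_prod_unfold gev_w_def intro!: continuous_intros)
  consider "0 < gev_w x g m s" | "gev_w x g m s < 0" | "gev_w x g m s = 0" by linarith
  then show ?thesis
  proof cases
    case 1
    then show ?thesis by (rule isCont_gev_powr_grad_interior[OF s])
  next
    case 2
    have "\<forall>\<^sub>F (x, g, m, s) in nhds (x, g, m, s). gev_w x g m s < 0"
      by (rule eventually_nhds_of_isCont_less[OF cont_w, where c = 0]) (use 2 in auto)
    then have "\<forall>\<^sub>F q in nhds (x, g, m, s). ?G q = 0"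
    proof eventually_elim
      case (elim q)
      obtain x' g' m' s' where q: "q = (x', g', m', s')" by (cases q)
      with elim show ?case by (simp add: gev_powr_grad_def)
    qed
    from isCont_cong[OF this] show ?thesis by simp
  next
    case 3
    obtain \<delta> M where \<delta>: "0 < \<delta>" and "0 \<le> M" and ev:
      "\<forall>\<^sub>F (x, g, m, s) in nhds (x, g, m, s).
         gev_density (g, m, s) x powr a \<le> M * max (gev_w x g m s) 0 powr (1 + \<delta>) \<and>
         norm (gev_powr_grad a x (g, m, s)) \<le> M * max (gev_w x g m s) 0 powr \<delta>"
      by (rule gev_boundary_decay[OF a s g 3])
    from ev have "\<forall>\<^sub>F q in nhds (x, g, m, s).
        norm (?G q) \<le> M * max ((\<lambda>(x, g, m, s). gev_w x g m s) q) 0 powr \<delta>"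
    proof eventually_elim
      case (elim q)
      obtain x' g' m' s' where q: "q = (x', g', m', s')" by (cases q)
      with elim show ?case by simp
    qed
    moreover have "((\<lambda>(x, g, m, s). gev_w x g m s) \<longlongrightarrow> 0) (nhds (x, g, m, s))"
      using cont_w 3 unfolding isCont_def tendsto_at_iff_tendsto_nhds by simp
    ultimately have "(?G \<longlongrightarrow> 0) (nhds (x, g, m, s))"
      by (rule tendsto_zero_of_powr_bound[OF _ \<delta>, rotated])
    then have "(?G \<longlongrightarrow> 0) (at (x, g, m, s))" by (rule tendsto_mono[OF at_within_le_nhds])
    with 3 show ?thesis by (simp add: isCont_def gev_powr_grad_def)
  qed
qed

lemma continuous_on_gev_powr_grad:
  assumes "0 < a"
  shows "continuous_on (UNIV \<times> Theta_a a) (\<lambda>p. gev_powr_grad a (fst p) (snd p))"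
proof (rule continuous_at_imp_continuous_on, clarify)
  fix x g m s assume "(g, m, s) \<in> Theta_a a"
  then show "isCont (\<lambda>p. gev_powr_grad a (fst p) (snd p)) (x, g, m, s)"
    using isCont_gev_powr_grad[OF assms] by (auto simp: Theta_a_def)
qed

theorem lemmaB5:
  fixes a :: real
  assumes "1/2 \<le> a" and "a < 1"
  shows "\<exists>D1 D2 D3 :: real \<Rightarrow> real \<times> real \<times> real \<Rightarrow> real.
    (\<forall>x. \<forall>\<theta>\<in>Theta_a a.
       ((\<lambda>t. gev_density t x powr a) has_derivative
          (\<lambda>h. D1 x \<theta> * fst h + D2 x \<theta> * fst (snd h) + D3 x \<theta> * snd (snd h))) (at \<theta>))
    \<and> continuous_on (UNIV \<times> Theta_a a) (\<lambda>(x, \<theta>). D1 x \<theta>)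
    \<and> continuous_on (UNIV \<times> Theta_a a) (\<lambda>(x, \<theta>). D2 x \<theta>)
    \<and> continuous_on (UNIV \<times> Theta_a a) (\<lambda>(x, \<theta>). D3 x \<theta>)"
proof (intro exI conjI allI ballI)
  have a: "0 < a" using assms by simp
  let ?G = "gev_powr_grad a"
  fix x \<theta> assume "\<theta> \<in> Theta_a a"
  from has_derivative_gev_density_powr[OF a this, of x]
  show "((\<lambda>t. gev_density t x powr a) has_derivative (\<lambda>h. fst (?G x \<theta>) * fst h
          + fst (snd (?G x \<theta>)) * fst (snd h) + snd (snd (?G x \<theta>)) * snd (snd h))) (at \<theta>)"
    by (simp only: inner_triple)
next
  have cont: "continuous_on (UNIV \<times> Theta_a a) (\<lambda>p. gev_powr_grad a (fst p) (snd p))"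
    using assms by (intro continuous_on_gev_powr_grad) simp
  show "continuous_on (UNIV \<times> Theta_a a) (\<lambda>(x, \<theta>). fst (gev_powr_grad a x \<theta>))"
    "continuous_on (UNIV \<times> Theta_a a) (\<lambda>(x, \<theta>). fst (snd (gev_powr_grad a x \<theta>)))"
    "continuous_on (UNIV \<times> Theta_a a) (\<lambda>(x, \<theta>). snd (snd (gev_powr_grad a x \<theta>)))"
    unfolding case_prod_unfold by (intro continuous_on_fst continuous_on_snd cont)+
qed

end
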